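(* Let $S^*\subset(0,\infty)$ be an open set that is additive (i.e. $a,b\in S^*\Rightarrow a+b\in S^*$), let $S=[0,\infty)\setminus S^*$, and let $L=\sup S$ (finite, since $S$ is bounded). For $x\in[0,L]$ let $a(x)=\sup\{y\in\partial S: y\le x\}$, $b(x)=\inf\{y\in\partial S: y\ge x\}$, $\alpha(x)=x-a(x)$, $\beta(x)=b(x)-x$, and define $h_S:[0,L]\to\mathbb{R}$ by $$h_S(x)=\begin{cases}0 & x\in\partial S,\\ \min(\alpha(x),\beta(x)) & x\in\operatorname{Int}S,\\ -\min(\alpha(x),\beta(x)) & x\in S^*.\end{cases}$$ (Equivalently, $h_S(x)=d(x,\partial S)$ on $\operatorname{Int}S$, $-d(x,\partial S)$ on $S^*$, and $0$ on $\partial S$.) Then: (a) for each $s\in S$, the graph of $h_S$ has a horizontal chord of length $s$, i.e. there exists $x\in[0,L-s]$ with $h_S(x)=h_S(x+s)$; (b) if $x,x+s\in[0,L]$ with $s\ge 0$ and $h_S(x)=h_S(x+s)$, then $s\in S$.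
   Context: $\partial S$ and $\operatorname{Int}S$ denote the boundary and interior of $S$ in $\mathbb{R}$; $d(x,\partial S)$ is the distance from $x$ to $\partial S$. $h_S$ is continuous. *)

theory Defs
  imports "HOL-Analysis.Analysis"
begin

definition bdry_left :: "real set \<Rightarrow> real \<Rightarrow> real" where
  "bdry_left S x = Sup {y \<in> frontier S. y \<le> x}"

definition bdry_right :: "real set \<Rightarrow> real \<Rightarrow> real" where
  "bdry_right S x = Inf {y \<in> frontier S. y \<ge> x}"

text \<open>The function h_S (meant on [0, Sup S]); the last branch is the case x in S*.\<close>
definition hS :: "real set \<Rightarrow> real \<Rightarrow> real" where
  "hS S x =
     (if x \<in> frontier S then 0
      else if x \<in> interior S then min (x - bdry_left S x) (bdry_right S x - x)
      else - min (x - bdry_left S x) (bdry_right S x - x))"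

end

theory Submission
  imports Defs
begin

text \<open>
  Write \<open>S = [0,\<infinity>) - S*\<close> and \<open>H y = d(y, -S) - d(y, S)\<close>, which agrees with \<open>h\<^sub>S\<close> on
  \<open>[0, L]\<close>. Additivity of \<open>S*\<close> makes \<open>H\<close> non-increasing under translation by any
  \<open>t \<in> S*\<close>: \<open>d(-, -S)\<close> can only drop and \<open>d(-, S)\<close> can only grow.

  (a) If no chord of length \<open>s \<in> S\<close> existed, then \<open>H(x + s) > H x\<close> on \<open>[0, L - s]\<close> by
  the intermediate value theorem, since \<open>H 0 = 0 \<le> H s\<close>. Then \<open>H (L - s) < H L = 0\<close>,
  so \<open>L - s \<in> S*\<close>. Now take the largest minimiser \<open>m\<close> of \<open>H\<close> on \<open>[0, L]\<close>: if \<open>m \<ge> s\<close>,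
  then \<open>H (m - s) < H m\<close>; otherwise \<open>m + (L - s)\<close> is a larger minimiser.

  (b) The monotonicity is strict: translation by \<open>s \<in> S*\<close> strictly increases \<open>d(x, S)\<close>
  when \<open>x \<notin> S\<close>, and strictly decreases \<open>d(x, -S)\<close> when \<open>x, x + s \<in> S\<close>. Otherwise, since
  \<open>S*\<close> is open, perturbing \<open>s\<close> would exhibit a local minimum of a distance function
  off its set; and if \<open>x > 0\<close> lies on the boundary of \<open>S\<close>, then \<open>x + s\<close> splits as a sum of two elements
  of \<open>S*\<close>. Hence \<open>H x = H (x + s)\<close> forces \<open>s \<notin> S*\<close>.
\<close>

lemma infdist_geI: "A \<noteq> {} \<Longrightarrow> (\<And>a. a \<in> A \<Longrightarrow> d \<le> dist x a) \<Longrightarrow> d \<le> infdist x A"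
  by (simp add: infdist_notempty cINF_greatest)

lemma infdist_closure: "infdist x (closure A) = infdist x A"
  by (simp add: infdist_eq_setdist)

lemma infdist_decreases_nearby:
  fixes A :: "'a::{heine_borel, real_normed_vector} set"
  assumes "closed A" "A \<noteq> {}" "y \<notin> A" "0 < \<delta>"
  obtains u where "norm u < \<delta>" "infdist (y + u) A < infdist y A"
proof -
  obtain p where p: "p \<in> A" "infdist y A = dist y p"
    using infdist_attains_inf[OF assms(1,2)] by blast
  define d where "d = dist y p"
  have "d > 0" using p assms(3) by (auto simp: d_def)
  define \<epsilon> where "\<epsilon> = min (\<delta>/2) d"
  have \<epsilon>: "0 < \<epsilon>" "\<epsilon> < \<delta>" "\<epsilon> \<le> d" using \<open>d > 0\<close> assms(4) by (auto simp: \<epsilon>_def)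
  define u where "u = (\<epsilon> / d) *\<^sub>R (p - y)"
  have norm_u: "norm u = \<epsilon>"
    using \<epsilon> \<open>d > 0\<close> by (simp add: u_def d_def dist_norm norm_minus_commute)
  have "y + u - p = (1 - \<epsilon> / d) *\<^sub>R (y - p)"
    by (simp add: u_def algebra_simps)
  then have "dist (y + u) p = (1 - \<epsilon> / d) * d"
    using \<epsilon> \<open>d > 0\<close> by (simp add: dist_norm d_def)
  then have "dist (y + u) p = d - \<epsilon>"
    using \<open>d > 0\<close> by (simp add: left_diff_distrib)
  then have "infdist (y + u) A < infdist y A"
    using infdist_le[OF p(1), of "y + u"] p(2) \<epsilon> by (simp add: d_def)
  with norm_u \<epsilon> show ?thesis by (intro that) simp_all
qed

lemma infdist_compl_eq_infdist_frontier:
  fixes A :: "real set"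
  assumes "y \<in> A" "-A \<noteq> {}"
  shows "infdist y (-A) = infdist y (frontier A)"
proof (rule antisym)
  have "frontier A \<noteq> {}"
    using connected_Int_frontier[of UNIV A] assms by auto
  moreover have "frontier A \<subseteq> closure (-A)"
    by (auto simp: frontier_def closure_complement)
  ultimately show "infdist y (-A) \<le> infdist y (frontier A)"
    using infdist_mono infdist_closure by metis
  show "infdist y (frontier A) \<le> infdist y (-A)"
  proof (rule infdist_geI)
    fix z assume "z \<in> -A"
    let ?I = "{min y z .. max y z}"
    have "y \<in> ?I" "z \<in> ?I" by auto
    then have "?I \<inter> A \<noteq> {}" "?I - A \<noteq> {}"
      using assms(1) \<open>z \<in> -A\<close> by blast+
    then obtain w where "w \<in> ?I" "w \<in> frontier A"
      using connected_Int_frontier[OF connected_Icc] by blast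
    then show "infdist y (frontier A) \<le> dist y z"
      using infdist_le[of w "frontier A" y] by (auto simp: dist_real_def)
  qed (use assms in auto)
qed

lemma infdist_real_eq_min:
  fixes T :: "real set"
  assumes "closed T" "a \<in> T" "a \<le> y" "b \<in> T" "y \<le> b"
  shows "infdist y T = min (y - Sup {z \<in> T. z \<le> y}) (Inf {z \<in> T. z \<ge> y} - y)"
proof -
  let ?A = "{z \<in> T. z \<le> y}" and ?B = "{z \<in> T. z \<ge> y}"
  have "?A = T \<inter> {..y}" "?B = T \<inter> {y..}" by auto
  then have closed: "closed ?A" "closed ?B" using assms(1) by (simp_all add: closed_Int)
  have nonempty: "?A \<noteq> {}" "?B \<noteq> {}" using assms by blast+
  have bdd: "bdd_above ?A" "bdd_below ?B"
    by (rule bdd_aboveI[of _ y], simp) (rule bdd_belowI[of _ y], simp)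
  have A: "Sup ?A \<in> ?A" using closed_contains_Sup[OF nonempty(1) bdd(1) closed(1)] .
  have B: "Inf ?B \<in> ?B" using closed_contains_Inf[OF nonempty(2) bdd(2) closed(2)] .
  show ?thesis
  proof (rule antisym)
    have "infdist y T \<le> y - Sup ?A" "infdist y T \<le> Inf ?B - y"
      using infdist_le[of "Sup ?A" T y] infdist_le[of "Inf ?B" T y] A B
      by (simp_all add: dist_real_def)
    then show "infdist y T \<le> min (y - Sup ?A) (Inf ?B - y)" by simp
    show "min (y - Sup ?A) (Inf ?B - y) \<le> infdist y T"
    proof (rule infdist_geI)
      fix z assume "z \<in> T"
      show "min (y - Sup ?A) (Inf ?B - y) \<le> dist y z"
      proof (cases "z \<le> y")
        case True
        then have "z \<le> Sup ?A" using \<open>z \<in> T\<close> bdd(1) by (intro cSup_upper) simp_all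
        then show ?thesis using True by (simp add: dist_real_def)
      next
        case False
        then have "Inf ?B \<le> z" using \<open>z \<in> T\<close> bdd(2) by (intro cInf_lower) simp_all
        then show ?thesis using False by (simp add: dist_real_def)
      qed
    qed (use assms in blast)
  qed
qed

lemma continuous_on_Icc_pos_if_nonzero:
  fixes g :: "real \<Rightarrow> real"
  assumes "continuous_on {a..b} g" "0 < g a" "\<forall>x\<in>{a..b}. g x \<noteq> 0" "x \<in> {a..b}"
  shows "0 < g x"
proof (rule ccontr)
  assume "\<not> 0 < g x"
  have "connected (g ` {a..b})"
    using connected_continuous_image[OF assms(1) connected_Icc] .
  moreover have "g x \<in> g ` {a..b}" "g a \<in> g ` {a..b}" using assms(4) by auto
  ultimately have "{g x..g a} \<subseteq> g ` {a..b}" by (rule connected_contains_Icc)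
  then have "0 \<in> g ` {a..b}" using \<open>\<not> 0 < g x\<close> assms(2) by auto
  then show False using assms(3) by auto
qed

locale open_additive_set =
  fixes Sstar :: "real set"
  assumes open_Sstar: "open Sstar" and Sstar_pos: "Sstar \<subseteq> {0<..}"
    and add_Sstar: "\<And>a b. a \<in> Sstar \<Longrightarrow> b \<in> Sstar \<Longrightarrow> a + b \<in> Sstar"
    and bdd_above_gaps: "bdd_above ({0..} - Sstar)"
begin

definition S :: "real set" where "S = {0..} - Sstar"

abbreviation "L \<equiv> Sup S"
abbreviation "sdist y \<equiv> infdist y (-S) - infdist y S"

lemma bdd_above_S: "bdd_above S"
  using bdd_above_gaps by (simp add: S_def)

lemma closed_S: "closed S"
  unfolding S_def using open_Sstar by (intro closed_Diff) auto

lemma zero_in_S: "0 \<in> S"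
  using Sstar_pos by (auto simp: S_def)

lemma S_nonempty: "S \<noteq> {}"
  using zero_in_S by auto

lemma compl_S_nonempty: "-S \<noteq> {}"
proof -
  have "-1 \<in> -S" by (simp add: S_def)
  then show ?thesis by blast
qed

lemma le_Sup_S: "y \<in> S \<Longrightarrow> y \<le> L"
  by (rule cSup_upper[OF _ bdd_above_S])

lemma Sup_S_in_S: "L \<in> S"
  using closed_contains_Sup[OF S_nonempty bdd_above_S closed_S] .

lemma frontier_S: "frontier S = S - interior S"
  using closed_S by (simp add: frontier_def closure_closed)

lemma zero_in_frontier_S: "0 \<in> frontier S"
proof -
  have "0 \<notin> interior S"
  proof
    assume "0 \<in> interior S"
    then obtain e where "e > 0" "ball 0 e \<subseteq> S" using mem_interior by blast
    moreover have "-e/2 \<in> ball 0 e" using \<open>e > 0\<close> by (auto simp: dist_real_def)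
    ultimately have "-e/2 \<in> S" by blast
    then show False using \<open>e > 0\<close> by (simp add: S_def)
  qed
  then show ?thesis using frontier_S zero_in_S by auto
qed

lemma Sup_S_in_frontier_S: "L \<in> frontier S"
proof -
  have "L \<notin> interior S"
  proof
    assume "L \<in> interior S"
    then obtain e where "e > 0" "ball L e \<subseteq> S" using mem_interior by blast
    moreover have "L + e/2 \<in> ball L e" using \<open>e > 0\<close> by (auto simp: dist_real_def)
    ultimately show False using le_Sup_S[of "L + e/2"] by auto
  qed
  then show ?thesis using frontier_S Sup_S_in_S by auto
qed

lemma infdist_frontier_S:
  assumes "0 \<le> y" "y \<le> L"
  shows "infdist y (frontier S) = min (y - bdry_left S y) (bdry_right S y - y)"
  unfolding bdry_left_def bdry_right_def
  using infdist_real_eq_min[OF frontier_closed zero_in_frontier_S _ Sup_S_in_frontier_S] assms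
  by simp

lemma sdist_frontier_S:
  assumes "y \<in> frontier S"
  shows "sdist y = 0"
proof -
  have "y \<in> S" using assms frontier_S by blast
  moreover have "y \<in> closure (-S)"
    using assms unfolding frontier_closures by blast
  ultimately show ?thesis
    using in_closure_iff_infdist_zero[OF compl_S_nonempty] by simp
qed

lemma sdist_nonneg: "y \<in> S \<Longrightarrow> 0 \<le> sdist y"
  using infdist_nonneg[of y "-S"] by simp

lemma hS_eq_sdist:
  assumes "0 \<le> y" "y \<le> L"
  shows "hS S y = sdist y"
proof -
  consider "y \<in> frontier S" | "y \<in> interior S" | "y \<notin> S"
    using frontier_S by blast
  then show ?thesis
  proof cases
    case 1
    then have "hS S y = 0" by (simp add: hS_def)
    then show ?thesis using sdist_frontier_S[OF 1] by linarith
  next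
    case 2
    then have "y \<in> S" "y \<notin> frontier S"
      using interior_subset frontier_S by blast+
    then show ?thesis
      using 2 infdist_compl_eq_infdist_frontier[OF _ compl_S_nonempty] infdist_frontier_S[OF assms]
      by (simp add: hS_def)
  next
    case 3
    then have "y \<notin> frontier S" "y \<notin> interior S"
      using frontier_S interior_subset by blast+
    have "infdist y (-(-S)) = infdist y (frontier (-S))"
      by (rule infdist_compl_eq_infdist_frontier)
        (use 3 S_nonempty in \<open>simp_all only: Compl_iff double_complement not_False_eq_True\<close>)
    then have "infdist y S = infdist y (frontier S)"
      unfolding double_complement frontier_complement .
    moreover have "infdist y (-S) = 0"
      using 3 by (intro infdist_zero) blast
    moreover have "hS S y = - infdist y (frontier S)"
      using \<open>y \<notin> frontier S\<close> \<open>y \<notin> interior S\<close> infdist_frontier_S[OF assms]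
      by (simp add: hS_def)
    ultimately show ?thesis by linarith
  qed
qed

lemma diff_in_S:
  assumes "z \<in> S" "t \<in> Sstar" "t \<le> z"
  shows "z - t \<in> S"
  using add_Sstar[of "z - t" t] assms by (auto simp: S_def)

lemma infdist_compl_S_add_le:
  assumes "t \<in> Sstar" "0 \<le> x"
  shows "infdist (x + t) (-S) \<le> infdist x (-S)"
proof (rule infdist_geI[OF compl_S_nonempty])
  fix z assume "z \<in> -S"
  show "infdist (x + t) (-S) \<le> dist x z"
  proof (cases "z \<in> Sstar")
    case True
    then have "z + t \<in> -S" using add_Sstar assms(1) by (simp add: S_def)
    then show ?thesis using infdist_le[of "z + t" "-S" "x + t"] by (simp add: dist_real_def)
  next
    case False
    then have "z < 0" using \<open>z \<in> -S\<close> by (auto simp: S_def)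
    have "t \<in> -S" using assms(1) by (simp add: S_def)
    then show ?thesis
      using infdist_le[of t "-S" "x + t"] \<open>z < 0\<close> assms(2) by (simp add: dist_real_def)
  qed
qed

lemma infdist_S_le_add:
  assumes "t \<in> Sstar" "0 \<le> x"
  shows "infdist x S \<le> infdist (x + t) S"
proof (rule infdist_geI[OF S_nonempty])
  fix z assume "z \<in> S"
  show "infdist x S \<le> dist (x + t) z"
  proof (cases "t \<le> z")
    case True
    then have "z - t \<in> S" using diff_in_S \<open>z \<in> S\<close> assms(1) by blast
    then show ?thesis using infdist_le[of "z - t" S x] by (simp add: dist_real_def)
  next
    case False
    then show ?thesis
      using infdist_le[OF zero_in_S, of x] assms(2) by (simp add: dist_real_def)
  qed
qed

lemma sdist_add_le:
  assumes "t \<in> Sstar" "0 \<le> x"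
  shows "sdist (x + t) \<le> sdist x"
  using infdist_compl_S_add_le[OF assms] infdist_S_le_add[OF assms] by linarith

lemma continuous_sdist: "continuous_on A (\<lambda>y. sdist y)"
  by (intro continuous_intros)

lemma exists_nonincreasing_step:
  assumes "0 \<le> s" "L - s \<in> Sstar"
  shows "\<exists>x\<in>{0..L - s}. sdist (x + s) \<le> sdist x"
proof -
  have "0 < L - s" using assms(2) Sstar_pos by auto
  have "0 \<le> L" using le_Sup_S[OF zero_in_S] .
  then have "\<exists>x\<in>{0..L}. \<forall>y\<in>{0..L}. sdist x \<le> sdist y"
    by (intro continuous_attains_inf[OF compact_Icc _ continuous_sdist]) simp
  then obtain x0 where x0: "x0 \<in> {0..L}" "\<forall>y\<in>{0..L}. sdist x0 \<le> sdist y"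
    by blast
  define M where "M = {y \<in> {0..L}. sdist y = sdist x0}"
  have "closed M" unfolding M_def
    by (rule continuous_closed_preimage_constant[OF continuous_sdist closed_atLeastAtMost])
  moreover have "M \<noteq> {}" "bdd_above M"
    using x0(1) by (auto simp: M_def intro: bdd_aboveI[of _ L])
  ultimately have "Sup M \<in> M" by (rule closed_contains_Sup[rotated -1])
  define m where "m = Sup M"
  have m: "m \<in> {0..L}" "sdist m = sdist x0" using \<open>Sup M \<in> M\<close> by (auto simp: M_def m_def)
  show ?thesis
  proof (cases "s \<le> m")
    case True
    then have "m - s \<in> {0..L - s}" using m(1) by auto
    moreover have "sdist m \<le> sdist (m - s)" using m x0(2) \<open>m - s \<in> {0..L - s}\<close> assms(1) by auto
    ultimately show ?thesis by (intro bexI[of _ "m - s"]) simp_all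
  next
    case False
    then have "m + (L - s) \<in> {0..L}" using m(1) \<open>0 < L - s\<close> by auto
    moreover have "sdist (m + (L - s)) \<le> sdist m" using sdist_add_le[OF assms(2)] m(1) by simp
    ultimately have "m + (L - s) \<in> M" using m x0(2) by (force simp: M_def)
    then have "m + (L - s) \<le> m" unfolding m_def using \<open>bdd_above M\<close> by (rule cSup_upper)
    then show ?thesis using \<open>0 < L - s\<close> by simp
  qed
qed

lemma chord_exists:
  assumes "s \<in> S"
  shows "\<exists>x\<in>{0..L - s}. hS S x = hS S (x + s)"
proof (rule ccontr)
  assume no_chord: "\<not> ?thesis"
  have s: "0 \<le> s" "s \<le> L" using assms le_Sup_S by (auto simp: S_def)
  define g where "g x = sdist (x + s) - sdist x" for x
  have g_nonzero: "\<forall>x\<in>{0..L - s}. g x \<noteq> 0"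
    using no_chord hS_eq_sdist s by (auto simp: g_def)
  have "g 0 \<noteq> 0" using g_nonzero s by simp
  moreover have "g 0 = sdist s - sdist 0" by (simp only: g_def add_0_left)
  ultimately have "0 < g 0"
    using sdist_nonneg[OF assms] sdist_frontier_S[OF zero_in_frontier_S] by linarith
  moreover have "continuous_on {0..L - s} g"
    unfolding g_def by (intro continuous_intros)
  ultimately have g_pos: "0 < g x" if "x \<in> {0..L - s}" for x
    using continuous_on_Icc_pos_if_nonzero g_nonzero that by blast
  have "sdist (L - s) < 0"
    using g_pos[of "L - s"] s sdist_frontier_S[OF Sup_S_in_frontier_S] by (simp add: g_def)
  have "L - s \<in> Sstar"
  proof (rule ccontr)
    assume "L - s \<notin> Sstar"
    then have "L - s \<in> S" using s by (simp add: S_def)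
    then show False using sdist_nonneg \<open>sdist (L - s) < 0\<close> by fastforce
  qed
  then obtain x where "x \<in> {0..L - s}" "sdist (x + s) \<le> sdist x"
    using exists_nonincreasing_step[OF s(1)] by blast
  then show False using g_pos unfolding g_def by fastforce
qed

lemma Sstar_contains_nbhd:
  assumes "s \<in> Sstar"
  obtains \<delta> where "0 < \<delta>" "\<And>u. \<bar>u\<bar> < \<delta> \<Longrightarrow> s + u \<in> Sstar"
proof -
  obtain \<delta> where "\<delta> > 0" "ball s \<delta> \<subseteq> Sstar"
    using openE[OF open_Sstar assms] by blast
  then show ?thesis by (intro that[of \<delta>]) (auto simp: subset_iff dist_real_def)
qed

lemma infdist_S_less_add:
  assumes "s \<in> Sstar" "0 \<le> x" "x \<notin> S"
  shows "infdist x S < infdist (x + s) S"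
proof (rule ccontr)
  assume "\<not> ?thesis"
  then have same: "infdist (x + s) S = infdist x S"
    using infdist_S_le_add[OF assms(1,2)] by linarith
  obtain \<delta> where "0 < \<delta>" and near_s: "\<And>u. \<bar>u\<bar> < \<delta> \<Longrightarrow> s + u \<in> Sstar"
    using Sstar_contains_nbhd[OF assms(1)] by blast
  have "0 < infdist x S" by (rule infdist_pos_not_in_closed[OF closed_S S_nonempty assms(3)])
  have "x + s \<notin> S"
  proof
    assume "x + s \<in> S"
    then show False using infdist_zero[of "x + s" S] same \<open>0 < infdist x S\<close> by linarith
  qed
  then obtain u where "norm u < \<delta>" and u: "infdist (x + s + u) S < infdist (x + s) S"
    using infdist_decreases_nearby[OF closed_S S_nonempty _ \<open>0 < \<delta>\<close>] by blast
  then have "\<bar>u\<bar> < \<delta>" by simp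
  then have "infdist x S \<le> infdist (x + (s + u)) S"
    by (rule infdist_S_le_add[OF near_s assms(2)])
  then have "infdist x S \<le> infdist (x + s + u) S" by (simp only: add.assoc)
  then show False using u same by linarith
qed

lemma infdist_compl_S_less_add:
  assumes "s \<in> Sstar" "x \<in> S" "x + s \<in> S"
  shows "infdist (x + s) (-S) < infdist x (-S)"
proof (rule ccontr)
  assume "\<not> ?thesis"
  moreover have "0 \<le> x" using assms(2) by (simp add: S_def)
  ultimately have same: "infdist (x + s) (-S) = infdist x (-S)"
    using infdist_compl_S_add_le[OF assms(1)] by fastforce
  obtain \<delta> where "0 < \<delta>" and near_s: "\<And>u. \<bar>u\<bar> < \<delta> \<Longrightarrow> s + u \<in> Sstar"
    using Sstar_contains_nbhd[OF assms(1)] by blast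
  have "x \<noteq> 0" using assms(1,3) by (auto simp: S_def)
  with \<open>0 \<le> x\<close> \<open>0 < \<delta>\<close> have "0 < min \<delta> x" by simp
  show False
  proof (cases "x \<in> closure (-S)")
    case True
    then obtain q where "q \<in> -S" "dist q x < min \<delta> x"
      using closure_approachable \<open>0 < min \<delta> x\<close> by blast
    then have "q \<in> Sstar" "s + (x - q) \<in> Sstar"
      using near_s[of "x - q"] by (auto simp: S_def dist_real_def)
    then have "q + (s + (x - q)) \<in> Sstar" by (rule add_Sstar)
    then show False using assms(3) by (simp add: S_def algebra_simps)
  next
    case False
    moreover have "closure (-S) \<noteq> {}" using compl_S_nonempty by simp
    ultimately obtain u where u: "norm u < min \<delta> x"
        "infdist (x + u) (closure (-S)) < infdist x (closure (-S))"
      using infdist_decreases_nearby[OF closed_closure _ _ \<open>0 < min \<delta> x\<close>] by blast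
    then have "\<bar>-u\<bar> < \<delta>" "0 \<le> x + u" by auto
    then have "s - u \<in> Sstar" using near_s[of "-u"] by simp
    then have "infdist (x + u + (s - u)) (-S) \<le> infdist (x + u) (-S)"
      using infdist_compl_S_add_le \<open>0 \<le> x + u\<close> by blast
    then show False using u(2)[unfolded infdist_closure] same by simp
  qed
qed

lemma chord_length_in_S:
  assumes "0 \<le> x" "0 \<le> s" "sdist x = sdist (x + s)"
  shows "s \<in> S"
proof (rule ccontr)
  assume "s \<notin> S"
  then have "s \<in> Sstar" using assms(2) by (simp add: S_def)
  have same_compl: "infdist (x + s) (-S) = infdist x (-S)"
    and same: "infdist (x + s) S = infdist x S"
    using assms(3) infdist_compl_S_add_le[OF \<open>s \<in> Sstar\<close> assms(1)]
      infdist_S_le_add[OF \<open>s \<in> Sstar\<close> assms(1)] by linarith+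
  show False
  proof (cases "x \<in> S")
    case True
    then have "infdist (x + s) S = 0" using same by simp
    then have "x + s \<in> S" using in_closed_iff_infdist_zero[OF closed_S S_nonempty] by blast
    then show False using infdist_compl_S_less_add[OF \<open>s \<in> Sstar\<close> True] same_compl by simp
  next
    case False
    then show False using infdist_S_less_add[OF \<open>s \<in> Sstar\<close> assms(1)] same by simp
  qed
qed

end

theorem proposition4:
  fixes Sstar :: "real set"
  assumes "open Sstar"
    and "Sstar \<subseteq> {0<..}"
    and "\<And>a b. a \<in> Sstar \<Longrightarrow> b \<in> Sstar \<Longrightarrow> a + b \<in> Sstar"
    and "bdd_above ({0..} - Sstar)"
  shows "(\<forall>s \<in> {0..} - Sstar. \<exists>x \<in> {0 .. Sup ({0..} - Sstar) - s}.
            hS ({0..} - Sstar) x = hS ({0..} - Sstar) (x + s))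
       \<and> (\<forall>x s. s \<ge> 0 \<and> x \<in> {0 .. Sup ({0..} - Sstar)} \<and> x + s \<in> {0 .. Sup ({0..} - Sstar)}
            \<and> hS ({0..} - Sstar) x = hS ({0..} - Sstar) (x + s) \<longrightarrow> s \<in> {0..} - Sstar)"
proof -
  interpret open_additive_set Sstar using assms by unfold_locales auto
  show ?thesis
    unfolding S_def[symmetric]
  proof (intro conjI ballI allI impI)
    fix s assume "s \<in> S"
    then show "\<exists>x\<in>{0..L - s}. hS S x = hS S (x + s)" by (rule chord_exists)
  next
    fix x s assume chord: "0 \<le> s \<and> x \<in> {0..L} \<and> x + s \<in> {0..L} \<and> hS S x = hS S (x + s)"
    then have "0 \<le> s" "0 \<le> x" "x \<le> L" "0 \<le> x + s" "x + s \<le> L" "hS S x = hS S (x + s)"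
      by simp_all
    then have "sdist x = sdist (x + s)"
      using hS_eq_sdist[OF \<open>0 \<le> x\<close> \<open>x \<le> L\<close>] hS_eq_sdist[OF \<open>0 \<le> x + s\<close> \<open>x + s \<le> L\<close>]
      by linarith
    then show "s \<in> S" by (rule chord_length_in_S[OF \<open>0 \<le> x\<close> \<open>0 \<le> s\<close>])
  qed
qed

end
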